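(* Let $D\subset\mathbb{C}^n$ be a hyperconvex domain, $\mathscr{P}$ a priori data on $D$ with poles $\mathbf{Z}=\{\mathbf{z}_1,\dots,\mathbf{z}_p\}$, and $\Phi^D_{\mathscr{P},\max}$ a global Zhou weight related to $\mathscr{P}$ on $D$. Then for every $\psi\in\mathrm{PSH}^-(D)$, the inequality $\psi\le\sigma_{\mathbf{Z}}\big(\psi,\Phi^D_{\mathscr{P},\max}\big)\Phi^D_{\mathscr{P},\max}$ holds on $D$.
   Context: $\mathrm{PSH}^-(D)$: negative plurisubharmonic functions on $D$. Hyperconvex: admits a continuous plurisubharmonic exhaustion $\varrho:D\to(-\infty,0)$. A priori data $\mathscr{P}=\big(\{\mathbf{z}_i\},\{\mathbf{f}_{0,i}\},\{u_{0,i}\}\big)$: distinct $\mathbf{z}_1,\dots,\mathbf{z}_p\in D$, holomorphic vectors $\mathbf{f}_{0,i}$ near $\mathbf{z}_i$ ($|\mathbf f|^2=\sum_j|f_j|^2$), plurisubharmonic $u_{0,i}$ near $\mathbf{z}_i$ with $|\mathbf{f}_{0,i}|^2e^{-2u_{0,i}}$ integrable near $\mathbf{z}_i$. Global Zhou weight related to $\mathscr{P}$ on $D$: $\Phi\in\mathrm{PSH}^-(D)$ such that (1) for large $N_i$, $|\mathbf{f}_{0,i}|^2e^{-2u_{0,i}}|z-\mathbf{z}_i|^{2N_i}e^{-2\Phi}$ is integrable near $\mathbf{z}_i$ for all $i$; (2) $|\mathbf{f}_{0,i}|^2e^{-2u_{0,i}-2\Phi}$ is not integrable near $\mathbf{z}_i$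 for all $i$; (3) any $\Psi\in\mathrm{PSH}^-(D)$ with $\Psi\ge\Phi$ and $|\mathbf{f}_{0,i}|^2e^{-2u_{0,i}-2\Psi}$ non-integrable near every $\mathbf{z}_i$ equals $\Phi$ on $D$. For plurisubharmonic $\psi$, $\sigma_{\mathbf{z}_i}(\psi,\Phi)=\sup\{c\ge0:\psi\le c\Phi+O(1)\text{ near }\mathbf{z}_i\}$ and $\sigma_{\mathbf{Z}}(\psi,\Phi)=\min_{1\le i\le p}\sigma_{\mathbf{z}_i}(\psi,\Phi)$. *)

theory Defs
  imports "HOL-Analysis.Analysis"
begin

text \<open>Points of C^n are vectors of type complex^'n (n = CARD('n)).
  Plurisubharmonic functions take values in ereal (value minus infinity allowed).\<close>

definition eexp :: "ereal \<Rightarrow> ennreal" where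
  "eexp t = (case t of ereal r \<Rightarrow> ennreal (exp r) | PInfty \<Rightarrow> \<infinity> | MInfty \<Rightarrow> 0)"

definition circle_mean ::
  "(complex^'n \<Rightarrow> ereal) \<Rightarrow> complex^'n \<Rightarrow> complex^'n \<Rightarrow> real \<Rightarrow> ereal" where
  "circle_mean u a b r =
     ereal (1 / (2 * pi)) *
      (enn2ereal (\<integral>\<^sup>+ \<theta> \<in> {0..2*pi}. e2ennreal (u (a + (of_real r * cis \<theta>) *s b)) \<partial>lborel)
     - enn2ereal (\<integral>\<^sup>+ \<theta> \<in> {0..2*pi}. e2ennreal (- u (a + (of_real r * cis \<theta>) *s b)) \<partial>lborel))"

definition psh_on :: "(complex^'n) set \<Rightarrow> (complex^'n \<Rightarrow> ereal) \<Rightarrow> bool" where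
  "psh_on U u \<longleftrightarrow>
     (\<forall>x\<in>U. u x < \<infinity>) \<and>
     (\<forall>x\<in>U. \<forall>t. u x < t \<longrightarrow> (\<forall>\<^sub>F y in at x within U. u y < t)) \<and>
     (\<forall>a\<in>U. \<forall>b r. r > 0 \<and> (\<forall>\<zeta>. cmod \<zeta> \<le> r \<longrightarrow> a + \<zeta> *s b \<in> U)
         \<longrightarrow> u a \<le> circle_mean u a b r)"

definition psh_neg :: "(complex^'n) set \<Rightarrow> (complex^'n \<Rightarrow> ereal) \<Rightarrow> bool" where
  "psh_neg D u \<longleftrightarrow> psh_on D u \<and> (\<forall>x\<in>D. u x \<le> 0)"

definition holo_on :: "(complex^'n) set \<Rightarrow> (complex^'n \<Rightarrow> complex^'m) \<Rightarrow> bool" where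
  "holo_on U F \<longleftrightarrow> (\<forall>x\<in>U. \<exists>L. (F has_derivative L) (at x) \<and> (\<forall>c v. L (c *s v) = c *s L v))"

definition hyperconvex :: "(complex^'n) set \<Rightarrow> bool" where
  "hyperconvex D \<longleftrightarrow> open D \<and> connected D \<and> D \<noteq> {} \<and>
     (\<exists>\<rho> :: complex^'n \<Rightarrow> real. continuous_on D \<rho> \<and> psh_on D (\<lambda>x. ereal (\<rho> x)) \<and>
        (\<forall>x\<in>D. \<rho> x < 0) \<and>
        (\<forall>c<0. compact (closure {x\<in>D. \<rho> x < c}) \<and> closure {x\<in>D. \<rho> x < c} \<subseteq> D))"

definition loc_integrable_at :: "complex^'n \<Rightarrow> (complex^'n \<Rightarrow> ennreal) \<Rightarrow> bool" where
  "loc_integrable_at z g \<longleftrightarrow> (\<exists>r>0. (\<integral>\<^sup>+ x \<in> ball z r. g x \<partial>lborel) < \<infinity>)"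

text \<open>A priori data: poles z 0..z (p-1), vectors f i, weights u i.\<close>
definition apriori_data ::
  "(complex^'n) set \<Rightarrow> nat \<Rightarrow> (nat \<Rightarrow> complex^'n) \<Rightarrow> (nat \<Rightarrow> complex^'n \<Rightarrow> complex^'m)
     \<Rightarrow> (nat \<Rightarrow> complex^'n \<Rightarrow> ereal) \<Rightarrow> bool" where
  "apriori_data D p z f u \<longleftrightarrow> 0 < p \<and> inj_on z {..<p} \<and> (\<forall>i<p. z i \<in> D) \<and>
     (\<forall>i<p. \<exists>r>0. ball (z i) r \<subseteq> D \<and> holo_on (ball (z i) r) (f i) \<and> psh_on (ball (z i) r) (u i)) \<and>
     (\<forall>i<p. loc_integrable_at (z i) (\<lambda>x. ennreal ((norm (f i x))\<^sup>2) * eexp (- 2 * u i x)))"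

definition global_zhou_weight ::
  "(complex^'n) set \<Rightarrow> nat \<Rightarrow> (nat \<Rightarrow> complex^'n) \<Rightarrow> (nat \<Rightarrow> complex^'n \<Rightarrow> complex^'m)
     \<Rightarrow> (nat \<Rightarrow> complex^'n \<Rightarrow> ereal) \<Rightarrow> (complex^'n \<Rightarrow> ereal) \<Rightarrow> bool" where
  "global_zhou_weight D p z f u \<Phi> \<longleftrightarrow> psh_neg D \<Phi> \<and>
     (\<forall>i<p. \<exists>N0. \<forall>N\<ge>N0. loc_integrable_at (z i)
        (\<lambda>x. ennreal ((norm (f i x))\<^sup>2) * eexp (- 2 * u i x) * ennreal (norm (x - z i) ^ (2 * N))
             * eexp (- 2 * \<Phi> x))) \<and>
     (\<forall>i<p. \<not> loc_integrable_at (z i)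
        (\<lambda>x. ennreal ((norm (f i x))\<^sup>2) * eexp (- 2 * u i x) * eexp (- 2 * \<Phi> x))) \<and>
     (\<forall>\<Psi>. psh_neg D \<Psi> \<and> (\<forall>x\<in>D. \<Phi> x \<le> \<Psi> x) \<and>
        (\<forall>i<p. \<not> loc_integrable_at (z i)
           (\<lambda>x. ennreal ((norm (f i x))\<^sup>2) * eexp (- 2 * u i x) * eexp (- 2 * \<Psi> x)))
        \<longrightarrow> (\<forall>x\<in>D. \<Psi> x = \<Phi> x))"

definition rel_type :: "complex^'n \<Rightarrow> (complex^'n \<Rightarrow> ereal) \<Rightarrow> (complex^'n \<Rightarrow> ereal) \<Rightarrow> ereal" where
  "rel_type z \<psi> \<Phi> = Sup {ereal c | c. c \<ge> 0 \<and>
      (\<exists>r>0. \<exists>C::real. \<forall>x\<in>ball z r. \<psi> x \<le> ereal c * \<Phi> x + ereal C)}"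

definition rel_type_set :: "nat \<Rightarrow> (nat \<Rightarrow> complex^'n) \<Rightarrow> (complex^'n \<Rightarrow> ereal) \<Rightarrow> (complex^'n \<Rightarrow> ereal) \<Rightarrow> ereal" where
  "rel_type_set p z \<psi> \<Phi> = Min ((\<lambda>i. rel_type (z i) \<psi> \<Phi>) ` {..<p})"

end

theory Submission
  imports Defs
begin

text \<open>Fix $0 < c < \sigma_{\mathbf Z}(\psi,\Phi)$. Near every pole $\psi \le c\Phi + O(1)$, so
  $\Psi = \max(\Phi, \psi/c)$ is a negative plurisubharmonic function with $\Phi \le \Psi \le \Phi + O(1)$
  near the poles; hence $e^{-2\Psi}$ is as non-integrable as $e^{-2\Phi}$ there, and the maximality
  of the global Zhou weight forces $\Psi = \Phi$, i.e.\ $\psi \le c\Phi$ on $D$. Letting $c$ increase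
  to $\sigma_{\mathbf Z}(\psi,\Phi)$ gives the claim.\<close>

text \<open>The integrands of circle means need not be measurable, so the library's
  \<open>nn_integral_cmult\<close> does not apply; positive constants nevertheless factor out.\<close>

lemma nn_integral_cmult_ge: "c * integral\<^sup>N M f \<le> (\<integral>\<^sup>+ x. c * f x \<partial>M)"
proof -
  have "c * integral\<^sup>N M f = (SUP g \<in> {g. simple_function M g \<and> g \<le> f}. c * integral\<^sup>S M g)"
    unfolding nn_integral_def by (rule SUP_mult_left_ennreal)
  also have "\<dots> \<le> (\<integral>\<^sup>+ x. c * f x \<partial>M)"
  proof (rule SUP_least)
    fix g assume g: "g \<in> {g. simple_function M g \<and> g \<le> f}"
    then have "simple_function M (\<lambda>x. c * g x)" "(\<lambda>x. c * g x) \<le> (\<lambda>x. c * f x)"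
      by (auto simp: le_fun_def intro: simple_function_compose1 mult_left_mono)
    then have "integral\<^sup>S M (\<lambda>x. c * g x) \<le> (\<integral>\<^sup>+ x. c * f x \<partial>M)"
      unfolding nn_integral_def by (intro SUP_upper) auto
    then show "c * integral\<^sup>S M g \<le> (\<integral>\<^sup>+ x. c * f x \<partial>M)"
      using g by simp
  qed
  finally show ?thesis .
qed

lemma nn_integral_cmult_pos:
  assumes "(k::real) > 0"
  shows "(\<integral>\<^sup>+ x. ennreal k * f x \<partial>M) = ennreal k * integral\<^sup>N M f"
proof (rule antisym)
  have inv: "ennreal (1/k) * ennreal k = 1"
    using assms by (simp add: ennreal_mult'[symmetric])
  have "ennreal (1/k) * (\<integral>\<^sup>+ x. ennreal k * f x \<partial>M)
      \<le> (\<integral>\<^sup>+ x. ennreal (1/k) * (ennreal k * f x) \<partial>M)"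
    by (rule nn_integral_cmult_ge)
  also have "\<dots> = integral\<^sup>N M f"
    by (simp add: mult.assoc[symmetric] inv)
  finally have "ennreal k * (ennreal (1/k) * (\<integral>\<^sup>+ x. ennreal k * f x \<partial>M))
      \<le> ennreal k * integral\<^sup>N M f"
    by (rule mult_left_mono) simp
  then show "(\<integral>\<^sup>+ x. ennreal k * f x \<partial>M) \<le> ennreal k * integral\<^sup>N M f"
    by (simp add: mult.assoc[symmetric] inv mult.commute[of "ennreal k"])
qed (rule nn_integral_cmult_ge)

lemma e2ennreal_cmult_pos:
  assumes "(k::real) > 0"
  shows "e2ennreal (ereal k * v) = ennreal k * e2ennreal v"
  using assms by (cases v) (auto simp: ennreal_mult' e2ennreal_neg ennreal_neg ennreal_mult_top)

lemma circle_mean_cmult: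
  assumes "(k::real) > 0"
  shows "circle_mean (\<lambda>x. ereal k * u x) a b r = ereal k * circle_mean u a b r"
proof -
  let ?I = "\<lambda>w. \<integral>\<^sup>+ \<theta> \<in> {0..2*pi}. e2ennreal (w (a + (of_real r * cis \<theta>) *s b)) \<partial>lborel"
  have I: "?I (\<lambda>x. ereal k * w x) = ennreal k * ?I w" for w :: "complex^'a \<Rightarrow> ereal"
    using nn_integral_cmult_pos[OF assms]
    by (simp add: e2ennreal_cmult_pos[OF assms] mult.assoc)
  have "- (ereal k * v) = ereal k * - v" for v
    by (cases v) auto
  then have "?I (\<lambda>x. - (ereal k * u x)) = ennreal k * ?I (\<lambda>x. - u x)"
    using I[of "\<lambda>x. - u x"] by simp
  moreover have "ereal k * enn2ereal A - ereal k * enn2ereal B = ereal k * (enn2ereal A - enn2ereal B)"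
    for A B
    using assms by (cases "enn2ereal A"; cases "enn2ereal B") (auto simp: algebra_simps)
  ultimately show ?thesis
    unfolding circle_mean_def I[of u] using assms
    by (simp add: times_ennreal.rep_eq mult.left_commute)
qed

lemma circle_mean_mono:
  assumes "\<And>x. u x \<le> v x"
  shows "circle_mean u a b r \<le> circle_mean v a b r"
proof -
  have "enn2ereal (\<integral>\<^sup>+ \<theta> \<in> S. e2ennreal (g \<theta>) \<partial>lborel)
      \<le> enn2ereal (\<integral>\<^sup>+ \<theta> \<in> S. e2ennreal (h \<theta>) \<partial>lborel)"
    if "\<And>\<theta>. g \<theta> \<le> h \<theta>" for g h :: "real \<Rightarrow> ereal" and S
    unfolding less_eq_ennreal.rep_eq[symmetric]
    by (intro nn_integral_mono mult_right_mono e2ennreal_mono that) simp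
  then show ?thesis
    unfolding circle_mean_def using assms
    by (intro ereal_mult_left_mono ereal_minus_mono) auto
qed

lemma psh_on_cmult:
  assumes "psh_on U u" and "(c::real) > 0"
  shows "psh_on U (\<lambda>x. ereal c * u x)"
  unfolding psh_on_def
proof (intro conjI ballI allI impI)
  fix x assume "x \<in> U"
  then show "ereal c * u x < \<infinity>"
    using assms by (cases "u x") (auto simp: psh_on_def)
next
  fix x t assume x: "x \<in> U" and "ereal c * u x < t"
  have less_iff: "ereal c * v < t \<longleftrightarrow> v < ereal (1/c) * t" for v
    using \<open>c > 0\<close> by (cases v; cases t) (auto simp: field_simps)
  have "\<forall>\<^sub>F y in at x within U. u y < ereal (1/c) * t"
    using assms(1) x \<open>ereal c * u x < t\<close> by (simp add: psh_on_def less_iff)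
  then show "\<forall>\<^sub>F y in at x within U. ereal c * u y < t"
    by (rule eventually_mono) (simp add: less_iff)
next
  fix a b r assume "a \<in> U" and "r > 0 \<and> (\<forall>\<zeta>. cmod \<zeta> \<le> r \<longrightarrow> a + \<zeta> *s b \<in> U)"
  then have "u a \<le> circle_mean u a b r"
    using assms(1) unfolding psh_on_def by blast
  then have "ereal c * u a \<le> ereal c * circle_mean u a b r"
    by (rule ereal_mult_left_mono) (use assms in simp)
  then show "ereal c * u a \<le> circle_mean (\<lambda>x. ereal c * u x) a b r"
    by (simp add: circle_mean_cmult[OF assms(2)])
qed

lemma psh_on_max:
  assumes "psh_on U u" and "psh_on U v"
  shows "psh_on U (\<lambda>x. max (u x) (v x))"
  unfolding psh_on_def
proof (intro conjI ballI allI impI)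
  fix x assume "x \<in> U"
  then show "max (u x) (v x) < \<infinity>"
    using assms by (auto simp: psh_on_def max_def)
next
  fix x t assume "x \<in> U" and "max (u x) (v x) < t"
  then have "\<forall>\<^sub>F y in at x within U. u y < t" "\<forall>\<^sub>F y in at x within U. v y < t"
    using assms unfolding psh_on_def by auto
  then show "\<forall>\<^sub>F y in at x within U. max (u y) (v y) < t"
    by eventually_elim simp
next
  fix a b r assume "a \<in> U" and "r > 0 \<and> (\<forall>\<zeta>. cmod \<zeta> \<le> r \<longrightarrow> a + \<zeta> *s b \<in> U)"
  then have "u a \<le> circle_mean u a b r" "v a \<le> circle_mean v a b r"
    using assms unfolding psh_on_def by blast+
  moreover have "circle_mean u a b r \<le> circle_mean (\<lambda>x. max (u x) (v x)) a b r"
    "circle_mean v a b r \<le> circle_mean (\<lambda>x. max (u x) (v x)) a b r"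
    by (auto intro: circle_mean_mono)
  ultimately show "max (u a) (v a) \<le> circle_mean (\<lambda>x. max (u x) (v x)) a b r"
    by (meson max.boundedI order_trans)
qed

lemma psh_neg_max_cmult:
  assumes "psh_neg D \<Phi>" "psh_neg D \<psi>" "(c::real) > 0"
  shows "psh_neg D (\<lambda>x. max (\<Phi> x) (ereal c * \<psi> x))"
proof -
  have "ereal c * \<psi> x \<le> 0" if "x \<in> D" for x
  proof -
    have "\<psi> x \<le> 0"
      using assms(2) that by (simp add: psh_neg_def)
    then show ?thesis
      using \<open>c > 0\<close> by (cases "\<psi> x") (auto simp: mult_nonneg_nonpos)
  qed
  then show ?thesis
    using assms by (auto simp: psh_neg_def intro: psh_on_max psh_on_cmult)
qed

lemma loc_integrable_at_le_cmult:
  assumes "loc_integrable_at z g" and "(K::real) > 0" and "r > 0"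
    and "\<And>x. x \<in> ball z r \<Longrightarrow> h x \<le> ennreal K * g x"
  shows "loc_integrable_at z h"
proof -
  obtain r' where "r' > 0" and fin: "(\<integral>\<^sup>+ x \<in> ball z r'. g x \<partial>lborel) < \<infinity>"
    using assms(1) unfolding loc_integrable_at_def by blast
  define \<rho> where "\<rho> = min r r'"
  have "(\<integral>\<^sup>+ x \<in> ball z \<rho>. h x \<partial>lborel)
      \<le> (\<integral>\<^sup>+ x. ennreal K * (g x * indicator (ball z r') x) \<partial>lborel)"
    using assms(4) by (intro nn_integral_mono) (auto simp: \<rho>_def indicator_def)
  also have "\<dots> = ennreal K * (\<integral>\<^sup>+ x \<in> ball z r'. g x \<partial>lborel)"
    using assms(2) by (rule nn_integral_cmult_pos)
  also have "\<dots> < \<infinity>"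
    using fin by (simp add: ennreal_mult_less_top)
  finally show ?thesis
    unfolding loc_integrable_at_def using \<open>r > 0\<close> \<open>r' > 0\<close> \<rho>_def
    by (intro exI[of _ \<rho>]) auto
qed

lemma eexp_neg2_le_shift:
  assumes "\<Psi> \<le> \<Phi> + ereal C"
  shows "eexp (- 2 * \<Phi>) \<le> ennreal (exp (2 * C)) * eexp (- 2 * \<Psi>)"
proof (cases \<Phi>; cases \<Psi>)
  fix \<phi> s assume "\<Phi> = ereal \<phi>" "\<Psi> = ereal s"
  with assms have "exp (- 2 * \<phi>) \<le> exp (2 * C) * exp (- 2 * s)"
    by (simp add: exp_add[symmetric])
  with \<open>\<Phi> = ereal \<phi>\<close> \<open>\<Psi> = ereal s\<close> show ?thesis
    by (simp add: eexp_def ennreal_mult'[symmetric] ennreal_leI)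
qed (use assms in \<open>auto simp: eexp_def ennreal_mult_top\<close>)

lemma not_loc_integrable_at_weight_shift:
  assumes "\<not> loc_integrable_at z (\<lambda>x. g x * eexp (- 2 * \<Phi> x))"
    and "r > 0" and "\<And>x. x \<in> ball z r \<Longrightarrow> \<Psi> x \<le> \<Phi> x + ereal C"
  shows "\<not> loc_integrable_at z (\<lambda>x. g x * eexp (- 2 * \<Psi> x))"
proof
  assume "loc_integrable_at z (\<lambda>x. g x * eexp (- 2 * \<Psi> x))"
  moreover have "g x * eexp (- 2 * \<Phi> x) \<le> ennreal (exp (2 * C)) * (g x * eexp (- 2 * \<Psi> x))"
    if "x \<in> ball z r" for x
  proof -
    have "g x * eexp (- 2 * \<Phi> x) \<le> g x * (ennreal (exp (2 * C)) * eexp (- 2 * \<Psi> x))"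
      using eexp_neg2_le_shift[OF assms(3)[OF that]] by (rule mult_left_mono) simp
    then show ?thesis
      by (simp only: mult.left_commute[of "g x"])
  qed
  ultimately have "loc_integrable_at z (\<lambda>x. g x * eexp (- 2 * \<Phi> x))"
    by (rule loc_integrable_at_le_cmult[OF _ exp_gt_zero \<open>r > 0\<close>])
  with assms(1) show False ..
qed

lemma rel_type_nonneg:
  assumes "r > 0" and "\<And>x. x \<in> ball z r \<Longrightarrow> \<psi> x \<le> 0"
  shows "0 \<le> rel_type z \<psi> \<Phi>"
proof -
  have "\<forall>x\<in>ball z r. \<psi> x \<le> ereal 0 * \<Phi> x + ereal 0"
    using assms(2) by (simp add: zero_ereal_def[symmetric])
  then show ?thesis
    unfolding rel_type_def zero_ereal_def using \<open>r > 0\<close> by (intro Sup_upper) blast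
qed

lemma rel_type_less_imp_bound:
  assumes "ereal c < rel_type z \<psi> \<Phi>" and "0 \<le> c"
    and "r0 > 0" and "\<And>x. x \<in> ball z r0 \<Longrightarrow> \<Phi> x \<le> 0"
  shows "\<exists>r>0. \<exists>C. \<forall>x\<in>ball z r. \<psi> x \<le> ereal c * \<Phi> x + ereal C"
proof -
  obtain c' r C where "c < c'" "r > 0" and bound: "\<forall>x\<in>ball z r. \<psi> x \<le> ereal c' * \<Phi> x + ereal C"
    using assms(1) unfolding rel_type_def less_Sup_iff by auto
  have "\<psi> x \<le> ereal c * \<Phi> x + ereal C" if "x \<in> ball z (min r r0)" for x
  proof -
    have "ereal c' * \<Phi> x \<le> ereal c * \<Phi> x"
      using \<open>c < c'\<close> \<open>0 \<le> c\<close> assms(4)[of x] that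
      by (cases "\<Phi> x") (auto simp: mult_right_mono_neg)
    moreover have "\<psi> x \<le> ereal c' * \<Phi> x + ereal C"
      using bound that by auto
    ultimately show ?thesis
      by (meson add_right_mono order_trans)
  qed
  moreover have "0 < min r r0"
    using \<open>r > 0\<close> \<open>r0 > 0\<close> by simp
  ultimately show ?thesis
    by blast
qed

lemma rel_type_set_le:
  assumes "i < p"
  shows "rel_type_set p z \<psi> \<Phi> \<le> rel_type (z i) \<psi> \<Phi>"
  unfolding rel_type_set_def using assms by (intro Min_le) auto

lemma rel_type_set_nonneg:
  assumes "0 < p" and "\<And>i. i < p \<Longrightarrow> 0 \<le> rel_type (z i) \<psi> \<Phi>"
  shows "0 \<le> rel_type_set p z \<psi> \<Phi>"
  unfolding rel_type_set_def using assms by (subst Min_ge_iff) auto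

lemma psh_neg_le_cmult_global_zhou_weight:
  assumes \<Phi>: "global_zhou_weight D p z f u \<Phi>" and \<psi>: "psh_neg D \<psi>" and "(c::real) > 0"
    and bound: "\<And>i. i < p \<Longrightarrow> \<exists>r>0. \<exists>C. \<forall>x\<in>ball (z i) r. \<psi> x \<le> ereal c * \<Phi> x + ereal C"
  shows "\<forall>x\<in>D. \<psi> x \<le> ereal c * \<Phi> x"
proof -
  have nonint: "\<not> loc_integrable_at (z i)
      (\<lambda>x. ennreal ((norm (f i x))\<^sup>2) * eexp (- 2 * u i x) * eexp (- 2 * \<Phi> x))" if "i < p" for i
    using \<Phi> that by (simp add: global_zhou_weight_def)
  note maximal = \<Phi>[unfolded global_zhou_weight_def, THEN conjunct2, THEN conjunct2, THEN conjunct2,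
      rule_format]
  define \<Psi> where "\<Psi> x = max (\<Phi> x) (ereal (1/c) * \<psi> x)" for x
  have "psh_neg D \<Psi>"
    unfolding \<Psi>_def using \<Phi> \<psi> \<open>c > 0\<close>
    by (intro psh_neg_max_cmult) (simp_all add: global_zhou_weight_def)
  moreover have "\<forall>x\<in>D. \<Phi> x \<le> \<Psi> x"
    by (simp add: \<Psi>_def)
  moreover have "\<not> loc_integrable_at (z i)
      (\<lambda>x. ennreal ((norm (f i x))\<^sup>2) * eexp (- 2 * u i x) * eexp (- 2 * \<Psi> x))" if "i < p" for i
  proof -
    obtain r C where "r > 0" and C: "\<forall>x\<in>ball (z i) r. \<psi> x \<le> ereal c * \<Phi> x + ereal C"
      using bound[OF \<open>i < p\<close>] by blast
    have "\<Psi> x \<le> \<Phi> x + ereal (max 0 (C / c))" if "x \<in> ball (z i) r" for x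
    proof -
      have "\<psi> x \<le> ereal c * \<Phi> x + ereal C"
        using C that by blast
      then have "ereal (1/c) * \<psi> x \<le> \<Phi> x + ereal (C / c)"
        using \<open>c > 0\<close> by (cases "\<psi> x"; cases "\<Phi> x") (auto simp: field_simps)
      also have "\<dots> \<le> \<Phi> x + ereal (max 0 (C / c))"
        by (intro add_left_mono) simp
      finally show ?thesis
        unfolding \<Psi>_def by (cases "\<Phi> x") (auto simp: max_def)
    qed
    then show ?thesis
      by (rule not_loc_integrable_at_weight_shift[OF nonint[OF \<open>i < p\<close>] \<open>r > 0\<close>])
  qed
  ultimately have "\<forall>x\<in>D. \<Psi> x = \<Phi> x"
    using maximal by blast
  show ?thesis
  proof
    fix x assume "x \<in> D"
    then have "ereal (1/c) * \<psi> x \<le> \<Phi> x"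
      using \<open>\<forall>x\<in>D. \<Psi> x = \<Phi> x\<close> unfolding \<Psi>_def by (metis max.cobounded2)
    then show "\<psi> x \<le> ereal c * \<Phi> x"
      using \<open>c > 0\<close> by (cases "\<psi> x"; cases "\<Phi> x") (auto simp: field_simps)
  qed
qed

lemma ereal_le_mult_nonpos_of_less:
  fixes \<sigma> \<phi> \<psi> :: ereal
  assumes "0 \<le> \<sigma>" "\<phi> \<le> 0" "\<psi> \<le> 0"
    and less: "\<And>c. 0 < c \<Longrightarrow> ereal c < \<sigma> \<Longrightarrow> \<psi> \<le> ereal c * \<phi>"
  shows "\<psi> \<le> \<sigma> * \<phi>"
proof (cases "\<sigma> = 0 \<or> \<phi> = 0")
  case True
  then show ?thesis using assms(3) by auto
next
  case False
  with assms have "0 < \<sigma>" "\<phi> < 0" by auto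
  show ?thesis
  proof (cases \<phi>)
    case MInf
    obtain c where "0 < ereal c" "ereal c < \<sigma>"
      using ereal_dense2[OF \<open>0 < \<sigma>\<close>] by blast
    then show ?thesis using less[of c] MInf by simp
  next
    case (real f)
    with \<open>\<phi> < 0\<close> have "f < 0" by simp
    show ?thesis
    proof (cases \<psi>)
      case (real y)
      have "\<sigma> \<le> ereal (y / f)"
      proof (rule dense_le_bounded[OF \<open>0 < \<sigma>\<close>])
        fix w assume "0 < w" "w < \<sigma>"
        then obtain c where "w = ereal c" "0 < c" by (cases w) auto
        then have "y \<le> c * f"
          using less[of c] \<open>w < \<sigma>\<close> \<open>\<psi> = ereal y\<close> \<open>\<phi> = ereal f\<close> by simp
        then show "w \<le> ereal (y / f)"
          using \<open>f < 0\<close> \<open>w = ereal c\<close> by (simp add: neg_le_divide_eq)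
      qed
      then obtain s where "\<sigma> = ereal s" "s \<le> y / f"
        using \<open>0 < \<sigma>\<close> by (cases \<sigma>) auto
      then show ?thesis
        using \<open>\<psi> = ereal y\<close> \<open>\<phi> = ereal f\<close> \<open>f < 0\<close> by (simp add: neg_le_divide_eq)
    qed (use assms in auto)
  qed (use \<open>\<phi> < 0\<close> in auto)
qed

theorem proposition1p9:
  fixes D :: "(complex^'n) set" and p :: nat and z :: "nat \<Rightarrow> complex^'n"
    and f :: "nat \<Rightarrow> complex^'n \<Rightarrow> complex^'m" and u :: "nat \<Rightarrow> complex^'n \<Rightarrow> ereal"
    and \<Phi> \<psi> :: "complex^'n \<Rightarrow> ereal"
  assumes "hyperconvex D"
    and "apriori_data D p z f u"
    and "global_zhou_weight D p z f u \<Phi>"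
    and "psh_neg D \<psi>"
  shows "\<forall>x\<in>D. \<psi> x \<le> rel_type_set p z \<psi> \<Phi> * \<Phi> x"
proof -
  have \<Phi>_nonpos: "\<And>x. x \<in> D \<Longrightarrow> \<Phi> x \<le> 0" and \<psi>_nonpos: "\<And>x. x \<in> D \<Longrightarrow> \<psi> x \<le> 0"
    using assms(3,4) by (auto simp: global_zhou_weight_def psh_neg_def)
  have pole_ball: "\<exists>r>0. ball (z i) r \<subseteq> D" if "i < p" for i
    using assms(2) that unfolding apriori_data_def by blast
  have "0 \<le> rel_type (z i) \<psi> \<Phi>" if "i < p" for i
  proof -
    obtain r where "r > 0" "ball (z i) r \<subseteq> D"
      using pole_ball[OF \<open>i < p\<close>] by blast
    then show ?thesis
      using \<psi>_nonpos by (intro rel_type_nonneg[of r]) auto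
  qed
  then have \<sigma>_nonneg: "0 \<le> rel_type_set p z \<psi> \<Phi>"
    using assms(2) by (intro rel_type_set_nonneg) (simp_all add: apriori_data_def)
  have below_c\<Phi>: "\<forall>x\<in>D. \<psi> x \<le> ereal c * \<Phi> x"
    if "0 < c" and c_less: "ereal c < rel_type_set p z \<psi> \<Phi>" for c
    using assms(3,4) \<open>0 < c\<close>
  proof (rule psh_neg_le_cmult_global_zhou_weight)
    fix i assume "i < p"
    obtain r where "r > 0" "ball (z i) r \<subseteq> D"
      using pole_ball[OF \<open>i < p\<close>] by blast
    then show "\<exists>r>0. \<exists>C. \<forall>x\<in>ball (z i) r. \<psi> x \<le> ereal c * \<Phi> x + ereal C"
      using less_le_trans[OF c_less rel_type_set_le[OF \<open>i < p\<close>]] \<open>0 < c\<close> \<Phi>_nonpos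
      by (intro rel_type_less_imp_bound[of _ _ _ _ r]) auto
  qed
  show ?thesis
  proof
    fix x assume "x \<in> D"
    show "\<psi> x \<le> rel_type_set p z \<psi> \<Phi> * \<Phi> x"
      by (rule ereal_le_mult_nonpos_of_less[OF \<sigma>_nonneg \<Phi>_nonpos[OF \<open>x \<in> D\<close>] \<psi>_nonpos[OF \<open>x \<in> D\<close>]])
        (use below_c\<Phi> \<open>x \<in> D\<close> in blast)
  qed
qed

end
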